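(* Let $\mathcal{A}$ be a finite alphabet equipped with a total order $<$, extended to the lexicographic order on infinite words, and let $a \in \mathcal{A}$. Suppose $\mathbf{t}, \mathbf{s}, \mathbf{t}^{(1)}, \mathbf{s}^{(1)} \in \mathcal{A}^{\omega}$ are infinite words such that $\mathbf{t} = \Psi_z(\mathbf{t}^{(1)})$ and $\mathbf{s} = \Psi_z(\mathbf{s}^{(1)})$ for some letter $z$ that occurs in $\mathbf{t}^{(1)}$. Then \[ \min(\mathbf{t}^{(1)}) = a\mathbf{s}^{(1)} \iff \min(\mathbf{t}) = a\mathbf{s}. \]
   Context: For a letter $z \in \mathcal{A}$, $\Psi_z$ is the morphism of $\mathcal{A}^*$ defined by $\Psi_z(z) = z$ and $\Psi_z(y) = zy$ for every letter $y \neq z$; it extends letterwise to infinite words. Lexicographic order on words: $u < v$ iff $u$ is a proper prefix of $v$, or $u = xbu'$, $v = xcv'$ with letters $b < c$; for infinite words $\mathbf{u} < \mathbf{v}$ iff they first differ at some position where $\mathbf{u}$ has the smaller letter. For an infinite word $\mathbf{w}$ and $k \ge 1$, let $\min(\mathbf{w}\,|\,k)$ denote the lexicographically smallest factor (contiguous block) of $\mathbf{w}$ of length $k$; these are prefixes of one another, and $\min(\mathbf{w})$ is the infinite word $\lim_{k\to\infty} \min(\mathbf{w}\,|\,k)$. *)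

theory Defs
  imports Main
begin

definition psi :: "'a \<Rightarrow> 'a \<Rightarrow> 'a list" where
  "psi z y = (if y = z then [z] else [z, y])"

text \<open>Letterwise extension of Psi_z to infinite words: the i-th letter of
  Psi_z(w) is the i-th letter of Psi_z(w 0) Psi_z(w 1) ... Psi_z(w i)
  (which has length at least i+1, since every image is nonempty).\<close>
definition psi_inf :: "'a \<Rightarrow> (nat \<Rightarrow> 'a) \<Rightarrow> (nat \<Rightarrow> 'a)" where
  "psi_inf z w = (\<lambda>i. concat (map (\<lambda>j. psi z (w j)) [0..<Suc i]) ! i)"

definition factors :: "(nat \<Rightarrow> 'a) \<Rightarrow> nat \<Rightarrow> 'a list set" where
  "factors w k = {map (\<lambda>j. w (i + j)) [0..<k] | i. True}"

definition min_factor :: "(nat \<Rightarrow> 'a::linorder) \<Rightarrow> nat \<Rightarrow> 'a list" where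
  "min_factor w k = (THE u. u \<in> factors w k \<and> (\<forall>v \<in> factors w k. lexordp_eq u v))"

text \<open>min(w) = lim_k min(w|k); since the min(w|k) are prefixes of one another,
  its i-th letter is the i-th letter of min(w|i+1).\<close>
definition min_word :: "(nat \<Rightarrow> 'a::linorder) \<Rightarrow> (nat \<Rightarrow> 'a)" where
  "min_word w = (\<lambda>i. min_factor w (Suc i) ! i)"

end

(*
  Write m = min(w) and b = m(0). Every factor of w is read off a suffix of w, and
  Psi_z maps suffixes of w to suffixes of Psi_z(w); conversely a suffix of Psi_z(w)
  is either Psi_z(u) for a suffix u of w, or y Psi_z(u') for a suffix y u' of w with
  y /= z. Since Psi_z is strictly monotone for the lexicographic order and m <= u
  for every suffix u, the word b Psi_z(m(1) m(2) ...) lies below every suffix of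
  Psi_z(w); because z occurs in w we have b <= z, which settles the suffixes
  starting with z. This word is Psi_z(m) if b = z and Psi_z(m) minus its first
  letter otherwise, so all its factors are factors of Psi_z(w). Hence
  min(Psi_z(w)) = b Psi_z(m(1) m(2) ...), and injectivity of Psi_z gives the
  equivalence.
*)

theory Submission
  imports Defs "HOL-Library.Omega_Words_Fun"
begin

definition word_less :: "'a::linorder word \<Rightarrow> 'a word \<Rightarrow> bool" where
  "word_less x y \<longleftrightarrow> (\<exists>p. (\<forall>j<p. x j = y j) \<and> x p < y p)"

definition word_le :: "'a::linorder word \<Rightarrow> 'a word \<Rightarrow> bool" where
  "word_le x y \<longleftrightarrow> x = y \<or> word_less x y"

lemma word_less_irrefl: "\<not> word_less x x"
  by (auto simp: word_less_def)

lemma word_less_linear: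
  assumes "x \<noteq> y" shows "word_less x y \<or> word_less y x"
proof -
  obtain p where "x p \<noteq> y p" and "\<forall>j<p. x j = y j"
    using assms exists_least_iff[of "\<lambda>p. x p \<noteq> y p"] by (auto simp: fun_eq_iff)
  then show ?thesis
    unfolding word_less_def by (metis linorder_neqE)
qed

lemma word_less_build_iff:
  "word_less (a ## x) (b ## y) \<longleftrightarrow> a < b \<or> a = b \<and> word_less x y"
proof
  assume "word_less (a ## x) (b ## y)"
  then obtain p where "\<forall>j<p. (a ## x) j = (b ## y) j" "(a ## x) p < (b ## y) p"
    by (auto simp: word_less_def)
  then show "a < b \<or> a = b \<and> word_less x y"
    by (cases p) (auto simp: word_less_def All_less_Suc2)
next
  assume "a < b \<or> a = b \<and> word_less x y"
  then show "word_less (a ## x) (b ## y)"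
  proof
    assume "a < b"
    then show ?thesis
      unfolding word_less_def by (intro exI[of _ 0]) simp
  next
    assume "a = b \<and> word_less x y"
    then obtain p where "a = b" "\<forall>j<p. x j = y j" "x p < y p"
      by (auto simp: word_less_def)
    then show ?thesis
      unfolding word_less_def by (intro exI[of _ "Suc p"]) (simp add: All_less_Suc2)
  qed
qed

lemma word_le_build_iff:
  "word_le (a ## x) (b ## y) \<longleftrightarrow> a < b \<or> a = b \<and> word_le x y"
  by (auto simp: word_le_def word_less_build_iff)

lemma word_less_conc: "word_less x y \<Longrightarrow> word_less (u \<frown> x) (u \<frown> y)"
  by (induction u) (simp_all add: word_less_build_iff)

lemma word_le_unfold:
  "word_le x y \<longleftrightarrow> x 0 < y 0 \<or> x 0 = y 0 \<and> word_le (suffix 1 x) (suffix 1 y)"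
  using word_le_build_iff[of "x 0" "suffix 1 x" "y 0" "suffix 1 y"] by simp

(* Plain lexordp would denote List's code-generation constant, which takes the order as an argument. *)
lemma lexordp_prefix_word_less:
  assumes "\<forall>j<p. x j = y j" and "x p < y p" and "p < k"
  shows "ord_class.lexordp (prefix k x) (prefix k y)"
proof -
  have "prefix k w = prefix p w @ w p # w [Suc p \<rightarrow> k]" for w :: "'a word"
  proof -
    have "[0..<k] = [0..<p] @ p # [Suc p..<k]"
      using assms(3) upt_add_eq_append[of 0 p "k - p"] by (simp add: upt_conv_Cons)
    then show ?thesis by (simp add: subsequence_def)
  qed
  moreover have "prefix p x = prefix p y"
    using assms(1) by (simp add: subsequence_def)
  ultimately show ?thesis
    using assms(2) by (metis lexordp_append_left_rightI)
qed

lemma word_le_iff_lexordp_eq_prefixes: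
  "word_le x y \<longleftrightarrow> (\<forall>k. lexordp_eq (prefix k x) (prefix k y))"
proof
  assume le: "word_le x y"
  show "\<forall>k. lexordp_eq (prefix k x) (prefix k y)"
  proof
    fix k
    show "lexordp_eq (prefix k x) (prefix k y)"
    proof (cases "x = y")
      case False
      then obtain p where p: "\<forall>j<p. x j = y j" "x p < y p"
        using le by (auto simp: word_le_def word_less_def)
      show ?thesis
      proof (cases "p < k")
        case True
        then show ?thesis
          using lexordp_prefix_word_less[OF p] lexordp_into_lexordp_eq by blast
      next
        case False
        then have "prefix k x = prefix k y"
          using p(1) by (simp add: subsequence_def)
        then show ?thesis by (simp add: lexordp_eq_refl)
      qed
    qed (simp add: lexordp_eq_refl)
  qed
next
  assume prefixes: "\<forall>k. lexordp_eq (prefix k x) (prefix k y)"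
  show "word_le x y"
  proof (rule ccontr)
    assume "\<not> word_le x y"
    then obtain p where "\<forall>j<p. y j = x j" "y p < x p"
      using word_less_linear[of x y] by (auto simp: word_le_def word_less_def)
    then have "ord_class.lexordp (prefix (Suc p) y) (prefix (Suc p) x)"
      by (rule lexordp_prefix_word_less) simp
    then show False
      using prefixes lexordp_conv_lexordp_eq by blast
  qed
qed

lemma lexordp_eq_take: "lexordp_eq xs ys \<Longrightarrow> lexordp_eq (take n xs) (take n ys)"
proof (induction arbitrary: n rule: lexordp_eq.induct)
  case (Cons_eq x y xs ys)
  then show ?case by (cases n) auto
qed (auto simp: take_Cons')

lemma subsequence_eq_iff:
  "w [i \<rightarrow> i + k] = v [l \<rightarrow> l + k] \<longleftrightarrow> (\<forall>j<k. w (i + j) = v (l + j))"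
  by (auto simp: list_eq_iff_nth_eq)

lemma factors_conv: "factors w k = {w [i \<rightarrow> i + k] | i. True}"
proof -
  have "map (\<lambda>j. w (i + j)) [0..<k] = w [i \<rightarrow> i + k]" for i
    by (simp add: list_eq_iff_nth_eq)
  then show ?thesis by (simp add: factors_def)
qed

lemma prefix_in_factors_iff: "prefix k x \<in> factors w k \<longleftrightarrow> (\<exists>i. \<forall>j<k. x j = w (i + j))"
  using subsequence_eq_iff[of x 0 k w] by (auto simp: factors_conv)

lemma finite_factors: "finite (factors (w :: 'a::finite word) k)"
proof -
  have "factors w k \<subseteq> {xs. set xs \<subseteq> UNIV \<and> length xs = k}"
    by (auto simp: factors_conv)
  then show ?thesis
    using finite_lists_length_eq[of "UNIV :: 'a set" k] finite_subset by auto
qed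

lemma finite_has_lexordp_eq_least:
  "finite A \<Longrightarrow> A \<noteq> {} \<Longrightarrow> \<exists>u\<in>A. \<forall>v\<in>A. lexordp_eq u (v :: 'a::linorder list)"
proof (induction A rule: finite_ne_induct)
  case (insert x F)
  then obtain u where u: "u \<in> F" "\<forall>v\<in>F. lexordp_eq u v" by blast
  show ?case
  proof (cases "lexordp_eq x u")
    case True then show ?thesis using u by (auto intro: lexordp_eq_trans lexordp_eq_refl)
  next
    case False then show ?thesis using u lexordp_eq_linear by blast
  qed
qed (simp add: lexordp_eq_refl)

context
  fixes w :: "'a::{finite, linorder} word"
begin

lemma min_factor_unique_ex: "\<exists>!u. u \<in> factors w k \<and> (\<forall>v \<in> factors w k. lexordp_eq u v)"
proof -
  have "factors w k \<noteq> {}"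
    by (auto simp: factors_conv)
  then obtain u where "u \<in> factors w k" "\<forall>v\<in>factors w k. lexordp_eq u v"
    using finite_has_lexordp_eq_least[OF finite_factors] by blast
  then show ?thesis
    by (blast intro: lexordp_eq_antisym)
qed

lemma min_factor_in_factors: "min_factor w k \<in> factors w k"
  and min_factor_least: "v \<in> factors w k \<Longrightarrow> lexordp_eq (min_factor w k) v"
  using theI'[OF min_factor_unique_ex[of k]] by (auto simp: min_factor_def)

lemma min_factor_eqI:
  "u \<in> factors w k \<Longrightarrow> (\<And>v. v \<in> factors w k \<Longrightarrow> lexordp_eq u v) \<Longrightarrow> min_factor w k = u"
  using min_factor_unique_ex[of k] min_factor_in_factors min_factor_least by blast

lemma take_min_factor:
  assumes "j \<le> k" shows "take j (min_factor w k) = min_factor w j"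
proof (rule sym, rule min_factor_eqI)
  have take_factor: "take j (w [i \<rightarrow> i + k]) = w [i \<rightarrow> i + j]" for i
    using assms by (simp add: min_def)
  note subsequence_take [simp del]
  obtain i where "min_factor w k = w [i \<rightarrow> i + k]"
    using min_factor_in_factors[of k] by (auto simp: factors_conv)
  then show "take j (min_factor w k) \<in> factors w j"
    by (auto simp: factors_conv take_factor)
  fix v assume "v \<in> factors w j"
  then obtain i' where "v = take j (w [i' \<rightarrow> i' + k])"
    by (auto simp: factors_conv take_factor)
  moreover have "w [i' \<rightarrow> i' + k] \<in> factors w k"
    by (auto simp: factors_conv)
  ultimately show "lexordp_eq (take j (min_factor w k)) v"
    by (simp add: lexordp_eq_take min_factor_least)
qed

lemma prefix_min_word: "prefix k (min_word w) = min_factor w k"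
proof (rule nth_equalityI)
  show "length (prefix k (min_word w)) = length (min_factor w k)"
    using min_factor_in_factors[of k] by (auto simp: factors_conv)
next
  fix i assume "i < length (prefix k (min_word w))"
  then have "i < k" by simp
  then have "min_factor w k ! i = min_factor w (Suc i) ! i"
    using take_min_factor[of "Suc i" k] by (metis lessI nth_take Suc_leI)
  with \<open>i < k\<close> show "prefix k (min_word w) ! i = min_factor w k ! i"
    by (simp add: min_word_def)
qed

lemma prefix_min_word_in_factors: "prefix k (min_word w) \<in> factors w k"
  by (simp add: prefix_min_word min_factor_in_factors)

lemma min_word_le_suffix: "word_le (min_word w) (suffix i w)"
proof -
  have "lexordp_eq (min_factor w k) (prefix k (suffix i w))" for k
    using min_factor_least[of "w [i \<rightarrow> i + k]" k] by (auto simp: factors_conv)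
  then show ?thesis
    by (simp add: word_le_iff_lexordp_eq_prefixes prefix_min_word)
qed

lemma min_word_eqI:
  assumes "\<And>k. prefix k x \<in> factors w k" and "\<And>i. word_le x (suffix i w)"
  shows "min_word w = x"
proof
  fix i
  have "min_factor w (Suc i) = prefix (Suc i) x"
  proof (rule min_factor_eqI)
    fix v assume "v \<in> factors w (Suc i)"
    then obtain l where "v = prefix (Suc i) (suffix l w)"
      by (auto simp: factors_conv)
    then show "lexordp_eq (prefix (Suc i) x) v"
      using assms(2)[of l] by (simp only: word_le_iff_lexordp_eq_prefixes)
  qed (rule assms(1))
  then show "min_word w i = x i"
    by (simp add: min_word_def nth_append)
qed
end

lemma prefix_suffix_in_factors:
  assumes "\<And>k. prefix k x \<in> factors w k"
  shows "prefix k (suffix n x) \<in> factors w k"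
proof -
  obtain i where "\<forall>j<n + k. x j = w (i + j)"
    using assms[of "n + k"] by (auto simp: prefix_in_factors_iff)
  then have "\<forall>j<k. suffix n x j = w (i + n + j)"
    by (simp add: add.assoc)
  then show ?thesis
    unfolding prefix_in_factors_iff by blast
qed

lemma length_concat_psi: "n \<le> length (concat (map (\<lambda>j. psi z (w j)) [0..<n]))"
  by (induction n) (auto simp: psi_def)

lemma nth_concat_psi:
  assumes "i < n" shows "concat (map (\<lambda>j. psi z (w j)) [0..<n]) ! i = psi_inf z w i"
proof -
  let ?C = "\<lambda>n. concat (map (\<lambda>j. psi z (w j)) [0..<n])"
  obtain d where n: "n = Suc i + d"
    using assms by (auto simp: less_iff_Suc_add)
  have "?C n = ?C (Suc i) @ concat (map (\<lambda>j. psi z (w j)) [Suc i..<Suc i + d])"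
    unfolding n by (simp only: upt_add_eq_append[OF le0] map_append concat_append)
  moreover have "i < length (?C (Suc i))"
    using length_concat_psi[of "Suc i" z w] by linarith
  ultimately show ?thesis
    by (simp add: nth_append psi_inf_def del: upt_Suc)
qed

lemma psi_inf_unfold: "psi_inf z w = psi z (w 0) \<frown> psi_inf z (suffix 1 w)"
proof
  fix i
  let ?u = "psi z (w 0)"
  have "psi_inf z w i = (?u @ concat (map (\<lambda>j. psi z (suffix 1 w j)) [0..<i])) ! i"
    by (simp add: psi_inf_def map_upt_Suc del: upt_Suc)
  moreover have "i - length ?u < i" if "\<not> i < length ?u"
    using that by (auto simp: psi_def)
  ultimately show "psi_inf z w i = (?u \<frown> psi_inf z (suffix 1 w)) i"
    by (auto simp: nth_append nth_concat_psi suffix_def)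
qed

lemma psi_inf_suffix_unfold:
  "psi_inf z (suffix i w) = psi z (w i) \<frown> psi_inf z (suffix (Suc i) w)"
  using psi_inf_unfold[of z "suffix i w"] by simp

lemma psi_inf_0 [simp]: "psi_inf z w 0 = z"
  by (subst psi_inf_unfold) (simp add: psi_def)

lemma psi_inf_Suc_0 [simp]: "psi_inf z w (Suc 0) = w 0"
  by (subst psi_inf_unfold) (simp add: psi_def)

lemma psi_inf_eq_upto:
  assumes "\<forall>j<k. x j = y j" and "i < k"
  shows "psi_inf z x i = psi_inf z y i"
  unfolding psi_inf_def using assms by (intro arg_cong2[where f = nth] arg_cong[where f = concat]) auto

lemma psi_conc: "psi z a \<frown> v = (if a = z then z ## v else z ## a ## v)"
  by (simp add: psi_def)

lemma suffix_Suc_0_build [simp]: "suffix (Suc 0) (a ## w) = w"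
  by (simp add: suffix_def)

lemma suffix_psi_inf_eq: "\<exists>q. suffix q (psi_inf z w) = psi_inf z (suffix i w)"
proof (induction i)
  case (Suc i)
  then obtain q where q: "suffix q (psi_inf z w) = psi_inf z (suffix i w)"
    by blast
  let ?l = "length (psi z (w i))"
  have "suffix (q + ?l) (psi_inf z w) = suffix ?l (psi_inf z (suffix i w))"
    by (simp only: suffix_suffix[symmetric] q)
  also have "\<dots> = psi_inf z (suffix (Suc i) w)"
    by (subst psi_inf_suffix_unfold) (rule suffix_conc_length)
  finally show ?case ..
qed (rule exI[of _ 0], simp)

lemma suffix_psi_inf_cases:
  "\<exists>i. suffix j (psi_inf z w) = psi_inf z (suffix i w) \<or>
       w i \<noteq> z \<and> suffix j (psi_inf z w) = w i ## psi_inf z (suffix (Suc i) w)"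
proof (induction j)
  case (Suc j)
  have step: "suffix (Suc j) v = suffix 1 (suffix j v)" for v :: "'a word"
    by simp
  from Suc obtain i where
    "suffix j (psi_inf z w) = psi_inf z (suffix i w) \<or>
     w i \<noteq> z \<and> suffix j (psi_inf z w) = w i ## psi_inf z (suffix (Suc i) w)"
    by blast
  then show ?case
  proof
    assume "suffix j (psi_inf z w) = psi_inf z (suffix i w)"
    then have unfolded:
      "suffix (Suc j) (psi_inf z w) = suffix 1 (psi z (w i) \<frown> psi_inf z (suffix (Suc i) w))"
      by (simp only: step flip: psi_inf_suffix_unfold)
    show ?case
    proof (cases "w i = z")
      case True
      with unfolded have "suffix (Suc j) (psi_inf z w) = psi_inf z (suffix (Suc i) w)"
        by (simp add: psi_conc)
      then show ?thesis by blast
    next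
      case False
      with unfolded have "suffix (Suc j) (psi_inf z w) = w i ## psi_inf z (suffix (Suc i) w)"
        by (simp add: psi_conc)
      with False show ?thesis by blast
    qed
  qed (auto simp only: step One_nat_def suffix_Suc_0_build)
qed (auto intro: exI[of _ 0])

lemma word_less_psi_inf: "word_less x y \<Longrightarrow> word_less (psi_inf z x) (psi_inf z y)"
proof -
  assume "word_less x y"
  then obtain p where "\<forall>j<p. x j = y j" "x p < y p"
    by (auto simp: word_less_def)
  then show ?thesis
  proof (induction p arbitrary: x y)
    case 0
    then show ?case
      unfolding word_less_def by (intro exI[of _ 1]) (simp add: All_less_Suc)
  next
    case (Suc p)
    then have "word_less (psi_inf z (suffix 1 x)) (psi_inf z (suffix 1 y))"
      by simp
    moreover have "x 0 = y 0"
      using Suc.prems by simp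
    ultimately show ?case
      by (metis psi_inf_unfold word_less_conc)
  qed
qed

lemma word_le_psi_inf: "word_le x y \<Longrightarrow> word_le (psi_inf z x) (psi_inf z y)"
  using word_less_psi_inf by (auto simp: word_le_def)

lemma inj_psi_inf: "inj (psi_inf (z :: 'a::linorder))"
proof (rule injI, rule ccontr)
  fix x y assume "psi_inf z x = psi_inf z y" and "x \<noteq> y"
  then show False
    using word_less_linear[of x y] word_less_psi_inf[of _ _ z] word_less_irrefl by metis
qed

lemma prefix_psi_inf_in_factors:
  assumes "\<And>k. prefix k x \<in> factors w k"
  shows "prefix k (psi_inf z x) \<in> factors (psi_inf z w) k"
proof -
  obtain i where "\<forall>j<k. x j = suffix i w j"
    using assms[of k] by (auto simp: prefix_in_factors_iff)
  then have "\<forall>j<k. psi_inf z x j = psi_inf z (suffix i w) j"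
    using psi_inf_eq_upto[of k x "suffix i w"] by blast
  moreover obtain q where "suffix q (psi_inf z w) = psi_inf z (suffix i w)"
    using suffix_psi_inf_eq[of z w i] by blast
  ultimately have "\<forall>j<k. psi_inf z x j = psi_inf z w (q + j)"
    by (metis suffix_nth)
  then show ?thesis
    unfolding prefix_in_factors_iff by blast
qed

lemma prefix_build_psi_inf_in_factors:
  assumes "\<And>k. prefix k m \<in> factors w k"
  shows "prefix k (m 0 ## psi_inf z (suffix 1 m)) \<in> factors (psi_inf z w) k"
proof -
  have "psi_inf z m = psi z (m 0) \<frown> psi_inf z (suffix 1 m)"
    by (rule psi_inf_unfold)
  then have "m 0 ## psi_inf z (suffix 1 m) = suffix (if m 0 = z then 0 else 1) (psi_inf z m)"
    by (simp add: psi_conc)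
  then show ?thesis
    by (metis assms prefix_suffix_in_factors prefix_psi_inf_in_factors)
qed

lemma build_psi_inf_le_suffix:
  assumes m_le: "\<And>i. word_le m (suffix i w)" and "m 0 \<le> z"
  shows "word_le (m 0 ## psi_inf z (suffix 1 m)) (suffix j (psi_inf z w))"
proof -
  define x where "x = m 0 ## psi_inf z (suffix 1 m)"
  obtain i where
    "suffix j (psi_inf z w) = psi_inf z (suffix i w) \<or>
     w i \<noteq> z \<and> suffix j (psi_inf z w) = w i ## psi_inf z (suffix (Suc i) w)"
    using suffix_psi_inf_cases[of j z w] by blast
  then show ?thesis
  proof
    assume suffix_j: "suffix j (psi_inf z w) = psi_inf z (suffix i w)"
    show ?thesis
    proof (cases "m 0 = z")
      case True
      then have "x = psi_inf z m"
        by (subst psi_inf_unfold) (simp add: psi_conc x_def)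
      then show ?thesis
        using suffix_j word_le_psi_inf[OF m_le[of i], where z = z] by (simp add: x_def)
    next
      case False
      then show ?thesis
        using suffix_j \<open>m 0 \<le> z\<close> word_le_unfold[of x "psi_inf z (suffix i w)"]
        by (simp add: x_def)
    qed
  next
    assume "w i \<noteq> z \<and> suffix j (psi_inf z w) = w i ## psi_inf z (suffix (Suc i) w)"
    moreover have "m 0 < w i \<or> m 0 = w i \<and> word_le (suffix 1 m) (suffix (Suc i) w)"
      using m_le[of i] word_le_unfold[of m "suffix i w"] by simp
    ultimately show ?thesis
      by (auto simp: word_le_build_iff intro: word_le_psi_inf)
  qed
qed

theorem min_word_psi_inf:
  fixes w :: "'a::{finite, linorder} word"
  assumes "z \<in> range w"
  shows "min_word (psi_inf z w) = min_word w 0 ## psi_inf z (suffix 1 (min_word w))"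
proof (rule min_word_eqI)
  obtain i where "z = w i"
    using assms by blast
  then have "min_word w 0 \<le> z"
    using min_word_le_suffix[of w i] word_le_unfold[of "min_word w" "suffix i w"] by auto
  then show "word_le (min_word w 0 ## psi_inf z (suffix 1 (min_word w))) (suffix j (psi_inf z w))" for j
    by (intro build_psi_inf_le_suffix min_word_le_suffix)
qed (intro prefix_build_psi_inf_in_factors prefix_min_word_in_factors)

theorem mainTheorem1:
  fixes t s t1 s1 :: "nat \<Rightarrow> 'a::{finite, linorder}"
    and a z :: "'a"
  assumes "t = psi_inf z t1"
    and "s = psi_inf z s1"
    and "z \<in> range t1"
  shows "min_word t1 = case_nat a s1 \<longleftrightarrow> min_word t = case_nat a s"
proof -
  have case_nat_build: "case_nat b v = b ## v" for b and v :: "'a word"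
    by (rule ext) (simp split: nat.split)
  define m where "m = min_word t1"
  have "min_word t = m 0 ## psi_inf z (suffix 1 m)"
    unfolding m_def assms(1) using assms(3) by (rule min_word_psi_inf)
  moreover have "m = m 0 ## suffix 1 m"
    by (rule build_split)
  ultimately show ?thesis
    unfolding case_nat_build assms(2) m_def[symmetric]
    by (metis build_eq inj_psi_inf[of z] inj_eq)
qed

end
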